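(* Let $\mathcal{M}=(W,R,V)$ be a Kripke model, $w_0\in W$, $\varphi_0$ a sentence of the modal $\mu$-calculus and $\Gamma$ an ordinal. Then every play of the $\Gamma$-bounded evaluation game $(\mathcal{M},w_0,\varphi_0,\Gamma)$ ends after finitely many rounds, i.e. reaches a position in which one of the players wins.
   Context: Formulae of the modal $\mu$-calculus over a set $\Phi$ of proposition symbols and a set $\Lambda$ of label symbols: $\varphi ::= p \mid \neg p \mid X \mid \varphi\vee\varphi \mid \varphi\wedge\varphi \mid \Diamond\varphi \mid \Box\varphi \mid \mu X\varphi \mid \nu X\varphi$ with $p\in\Phi$, $X\in\Lambda$. $\mathrm{Sub}(\varphi)$ is the set of nodes (occurrences) of the syntax tree of $\varphi$; $\mathrm{Sub}_{\mu\nu}(\varphi)$ is the set of those occurrences of the form $\mu X\psi$ or $\nu X\psi$. A label occurrence $X$ is free if it is not inside any subformula $\mu X\psi$ or $\nu X\psi$; a sentence has no free label occurrences. For an occurrence $X$ in a sentence $\varphi_0$, its reference formula $\mathrm{rf}(X)$ is the nearest ancestor of that occurrence in the syntax tree of the form $\mu X\psi$ or $\nu X\psi$ (same label $X$). A Kripke model is $\mathcal{M}=(W,R,V)$ with $W\neq\emptyset$, $R\subseteq W\times W$, $V:\Phi\to\mathcal{P}(W)$. The $\Gamma$-bounded evaluation game $(\mathcal{M},w_0,\varphi_0,\Gamma)$ is played by Eloise and Abelard. Positions are $(w,\varphi,c)$ with $w\in W$, $\varphi\in\mathrm{Sub}(\varphi_0)$ and $c:\mathrm{Sub}_{\mu\nu}(\varphi_0)\to\{\gamma\mid\gamma\le\Gamma\}$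 a clock mapping. The initial position is $(w_0,\varphi_0,c_0)$ with $c_0(\theta)=\Gamma$ for all $\theta$. Rules: at $(w,p,c)$ Eloise wins iff $w\in V(p)$, else Abelard wins; at $(w,\neg p,c)$ Eloise wins iff $w\notin V(p)$, else Abelard wins; at $(w,\psi\vee\theta,c)$ Eloise chooses the next position $(w,\psi,c)$ or $(w,\theta,c)$; at $(w,\psi\wedge\theta,c)$ Abelard chooses likewise; at $(w,\Diamond\psi,c)$ Eloise chooses $v$ with $wRv$ and play moves to $(v,\psi,c)$, and Abelard wins if no such $v$ exists; at $(w,\Box\psi,c)$ Abelard chooses $v$ with $wRv$ and play moves to $(v,\psi,c)$, and Eloise wins if no such $v$ exists; at $(w,\mu X\psi,c)$ Eloise chooses an ordinal $\gamma<\Gamma$ and play moves to $(w,\psi,c[\gamma/\mu X\psi])$ (where $c[\gamma/\theta]$ agrees with $c$ except that it sends $\theta$ to $\gamma$); at $(w,\nu X\psi,c)$ Abelard chooses $\gamma<\Gamma$ and play moves to $(w,\psi,c[\gamma/\nu X\psi])$. At $(w,X,c)$, let $\gamma=c(\mathrm{rf}(X))$. If $\mathrm{rf}(X)=\mu X\psi$: if $\gamma=0$ Abelard wins; otherwise Eloise chooses $\gamma'<\gamma$ and play moves to $(w,\psi,c')$ where $c'(\mu X\psi)=\gamma'$, $c'(\theta)=\Gamma$ for every $\theta\in\mathrm{Sub}_{\mu\nu}(\varphi_0)$ lying inside $\psi$, and $c'(\theta)=c(\theta)$ otherwise. If $\mathrm{rf}(X)=\nu X\psi$: the same with roles swapped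 (if $\gamma=0$ Eloise wins; otherwise Abelard chooses $\gamma'<\gamma$, with the same update of the clock mapping). Each application of a rule is one round. *)

theory Defs
  imports Main "HOL-Library.Sublist"
begin

datatype ('p, 'l) fml =
    Prop 'p
  | NProp 'p
  | Var 'l
  | Or "('p, 'l) fml" "('p, 'l) fml"
  | And "('p, 'l) fml" "('p, 'l) fml"
  | Dia "('p, 'l) fml"
  | Box "('p, 'l) fml"
  | Mu 'l "('p, 'l) fml"
  | Nu 'l "('p, 'l) fml"

text \<open>Occurrences (nodes of the syntax tree) are addressed by paths:
  0 = left / only child, 1 = right child.  subat phi pi is the subformula
  at node pi (None if pi is not a node).\<close>
fun subat :: "('p, 'l) fml \<Rightarrow> nat list \<Rightarrow> ('p, 'l) fml option" where
  "subat f [] = Some f"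
| "subat (Or a b) (i # pi) = (if i = 0 then subat a pi else if i = 1 then subat b pi else None)"
| "subat (And a b) (i # pi) = (if i = 0 then subat a pi else if i = 1 then subat b pi else None)"
| "subat (Dia a) (i # pi) = (if i = 0 then subat a pi else None)"
| "subat (Box a) (i # pi) = (if i = 0 then subat a pi else None)"
| "subat (Mu X a) (i # pi) = (if i = 0 then subat a pi else None)"
| "subat (Nu X a) (i # pi) = (if i = 0 then subat a pi else None)"
| "subat _ (_ # _) = None"

definition Sub :: "('p, 'l) fml \<Rightarrow> nat list set" where
  "Sub f = {pi. subat f pi \<noteq> None}"

definition binds :: "('p, 'l) fml \<Rightarrow> 'l \<Rightarrow> nat list \<Rightarrow> bool" where
  "binds f X pi \<longleftrightarrow> (\<exists>psi. subat f pi = Some (Mu X psi) \<or> subat f pi = Some (Nu X psi))"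

definition Sub_munu :: "('p, 'l) fml \<Rightarrow> nat list set" where
  "Sub_munu f = {pi. \<exists>X. binds f X pi}"

definition sentence :: "('p, 'l) fml \<Rightarrow> bool" where
  "sentence f \<longleftrightarrow> (\<forall>pi X. subat f pi = Some (Var X) \<longrightarrow>
      (\<exists>pi'. strict_prefix pi' pi \<and> binds f X pi'))"

definition is_rf :: "('p, 'l) fml \<Rightarrow> nat list \<Rightarrow> nat list \<Rightarrow> bool" where
  "is_rf f pi pi' \<longleftrightarrow> (\<exists>X. subat f pi = Some (Var X) \<and> strict_prefix pi' pi \<and> binds f X pi' \<and>
      (\<forall>pi''. strict_prefix pi' pi'' \<and> strict_prefix pi'' pi \<longrightarrow> \<not> binds f X pi''))"

definition regen_clock ::
  "('p, 'l) fml \<Rightarrow> 'o \<Rightarrow> nat list \<Rightarrow> 'o \<Rightarrow> (nat list \<Rightarrow> 'o) \<Rightarrow> (nat list \<Rightarrow> 'o)" where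
  "regen_clock f Gamma th g' c = (\<lambda>t. if t = th then g'
      else if t \<in> Sub_munu f \<and> prefix (th @ [0]) t then Gamma else c t)"

text \<open>Ordinals are modelled by elements of a well-ordered type 'o; the clock
  values are the elements g with g \<le> Gamma.
  Positions without a legal next position are those where the play ends.\<close>
type_synonym ('w, 'o) position = "'w \<times> nat list \<times> (nat list \<Rightarrow> 'o)"

definition game_move ::
  "'w set \<Rightarrow> ('w \<times> 'w) set \<Rightarrow> ('p \<Rightarrow> 'w set) \<Rightarrow> ('p, 'l) fml \<Rightarrow> 'o::wellorder
    \<Rightarrow> ('w, 'o) position \<Rightarrow> ('w, 'o) position \<Rightarrow> bool" where
  "game_move W R V f Gamma p q \<longleftrightarrow>
    (case p of (w, pi, c) \<Rightarrow>
      (\<exists>a b. subat f pi = Some (Or a b) \<and> (q = (w, pi @ [0], c) \<or> q = (w, pi @ [1], c)))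
    \<or> (\<exists>a b. subat f pi = Some (And a b) \<and> (q = (w, pi @ [0], c) \<or> q = (w, pi @ [1], c)))
    \<or> (\<exists>a v. subat f pi = Some (Dia a) \<and> (w, v) \<in> R \<and> q = (v, pi @ [0], c))
    \<or> (\<exists>a v. subat f pi = Some (Box a) \<and> (w, v) \<in> R \<and> q = (v, pi @ [0], c))
    \<or> (\<exists>X a g. subat f pi = Some (Mu X a) \<and> g < Gamma \<and> q = (w, pi @ [0], c(pi := g)))
    \<or> (\<exists>X a g. subat f pi = Some (Nu X a) \<and> g < Gamma \<and> q = (w, pi @ [0], c(pi := g)))
    \<or> (\<exists>th X a g'. is_rf f pi th \<and> subat f th = Some (Mu X a) \<and> g' < c th \<and>
          q = (w, th @ [0], regen_clock f Gamma th g' c))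
    \<or> (\<exists>th X a g'. is_rf f pi th \<and> subat f th = Some (Nu X a) \<and> g' < c th \<and>
          q = (w, th @ [0], regen_clock f Gamma th g' c)))"

definition kripke :: "'w set \<Rightarrow> ('w \<times> 'w) set \<Rightarrow> ('p \<Rightarrow> 'w set) \<Rightarrow> bool" where
  "kripke W R V \<longleftrightarrow> W \<noteq> {} \<and> R \<subseteq> W \<times> W \<and> (\<forall>p. V p \<subseteq> W)"

end

theory Submission
  imports Defs "HOL-Library.Infinite_Set"
begin

text \<open>Follow the occurrence component of a play in the syntax tree of \<open>\<phi>\<^sub>0\<close>. Every round
  either moves to a child, or regenerates at a fixpoint ancestor \<open>\<theta>\<close>: the play jumps to the
  body of \<open>\<theta>\<close>, the clock of \<open>\<theta>\<close> strictly decreases, and only clocks strictly inside that body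
  are reset. Since the tree has bounded depth, an infinite play regenerates infinitely often;
  let \<open>\<theta>\<close> be a shallowest node at which it regenerates infinitely often. From some point on the
  play never regenerates above \<open>\<theta>\<close>, so it stays inside the body of \<open>\<theta>\<close> and the clock of \<open>\<theta>\<close> is
  never reset: it never increases but decreases infinitely often, which is impossible in a
  well-order.\<close>

lemma MOST_Suc_le_imp_MOST_Suc_eq:
  fixes f :: "nat \<Rightarrow> 'a::wellorder"
  assumes "MOST i. f (Suc i) \<le> f i"
  shows "MOST i. f (Suc i) = f i"
proof -
  from assms obtain n where nonincr: "\<And>i. i \<ge> n \<Longrightarrow> f (Suc i) \<le> f i"
    by (auto simp: MOST_nat_le)
  have antimono: "f j \<le> f i" if "n \<le> i" "i \<le> j" for i j
    using \<open>i \<le> j\<close>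
  proof (induction j rule: dec_induct)
    case (step j)
    then show ?case using nonincr[of j] \<open>n \<le> i\<close> by (meson order.trans le_trans)
  qed simp
  define m where "m = (LEAST v. \<exists>i\<ge>n. v = f i)"
  obtain i0 where "i0 \<ge> n" "m = f i0"
    using LeastI_ex[of "\<lambda>v. \<exists>i\<ge>n. v = f i"] unfolding m_def by blast
  have "f i = m" if "i \<ge> i0" for i
  proof (rule antisym)
    show "f i \<le> m"
      using antimono[of i0 i] that \<open>i0 \<ge> n\<close> \<open>m = f i0\<close> by simp
    show "m \<le> f i"
      unfolding m_def using that \<open>i0 \<ge> n\<close> by (intro Least_le exI[where x = i]) auto
  qed
  then show ?thesis
    unfolding MOST_nat_le by (intro exI[where x = i0]) simp
qed

definition descends :: "nat list \<Rightarrow> (nat list \<Rightarrow> 'o) \<Rightarrow> nat list \<Rightarrow> (nat list \<Rightarrow> 'o) \<Rightarrow> bool" where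
  "descends pi c pi' c' \<longleftrightarrow> (\<exists>k. pi' = pi @ [k]) \<and> (\<forall>t. t \<noteq> pi \<longrightarrow> c' t = c t)"

definition regenerates ::
  "nat list \<Rightarrow> nat list \<Rightarrow> (nat list \<Rightarrow> 'o::order) \<Rightarrow> nat list \<Rightarrow> (nat list \<Rightarrow> 'o) \<Rightarrow> bool" where
  "regenerates th pi c pi' c' \<longleftrightarrow> strict_prefix th pi \<and> pi' = th @ [0] \<and> c' th < c th \<and>
     (\<forall>t. t \<noteq> th \<and> \<not> prefix (th @ [0]) t \<longrightarrow> c' t = c t)"

locale clocked_play =
  fixes P :: "nat \<Rightarrow> nat list" and C :: "nat \<Rightarrow> nat list \<Rightarrow> 'o::order"
  assumes play_step: "\<And>i. descends (P i) (C i) (P (Suc i)) (C (Suc i)) \<or>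
    (\<exists>th. regenerates th (P i) (C i) (P (Suc i)) (C (Suc i)))"
begin

abbreviation regen :: "nat \<Rightarrow> nat list \<Rightarrow> bool" where
  "regen i th \<equiv> regenerates th (P i) (C i) (P (Suc i)) (C (Suc i))"

lemma regen_node: "regen i th \<Longrightarrow> th = butlast (P (Suc i))"
  by (simp add: regenerates_def)

lemma INFM_regen:
  assumes "finite (range P)"
  shows "INFM i. \<exists>th. regen i th"
proof (rule ccontr)
  assume "\<not> ?thesis"
  then obtain m where "\<And>i. i \<ge> m \<Longrightarrow> descends (P i) (C i) (P (Suc i)) (C (Suc i))"
    using play_step by (auto simp: MOST_nat_le)
  then have "\<exists>k. P (Suc (m + j)) = P (m + j) @ [k]" for j
    by (simp add: descends_def)
  then have grows: "length (P (m + j)) = length (P m) + j" for j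
    by (induction j) (auto, metis length_append_singleton)
  have "finite (length ` range P)"
    using assms by simp
  then obtain B where "\<And>i. length (P i) \<le> B"
    by (meson finite_nat_set_iff_bounded_le rangeI image_eqI)
  from this[of "m + Suc B"] show False
    using grows[of "Suc B"] by simp
qed

lemma obtain_shallowest_recurrent_regen:
  assumes "finite (range P)"
  obtains ts where "INFM i. regen i ts" and "MOST i. \<forall>th. regen i th \<longrightarrow> length ts \<le> length th"
proof -
  let ?T = "butlast ` range P"
  have "finite ?T"
    using assms by simp
  have "INFM i. \<exists>th\<in>?T. regen i th"
    using INFM_regen[OF assms] by (rule INFM_mono) (use regen_node in blast)
  then obtain th0 where "INFM i. regen i th0"
    using INFM_finite_Bex_distrib[OF \<open>finite ?T\<close>, of "\<lambda>th i. regen i th"] by blast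
  then obtain ts where ts: "INFM i. regen i ts"
    and least: "\<And>th. (INFM i. regen i th) \<Longrightarrow> length ts \<le> length th"
    using ex_has_least_nat[of "\<lambda>th. INFM i. regen i th" th0 length] by blast
  let ?S = "{th \<in> ?T. length th < length ts}"
  have "\<forall>th\<in>?S. MOST i. \<not> regen i th"
    using least by force
  then have "MOST i. \<forall>th\<in>?S. \<not> regen i th"
    using \<open>finite ?T\<close> by (subst MOST_finite_Ball_distrib) auto
  then have "MOST i. \<forall>th. regen i th \<longrightarrow> length ts \<le> length th"
    by (rule MOST_mono) (use regen_node in fastforce)
  with ts show thesis
    using that by blast
qed

context
  fixes t ts
  assumes regen_t: "regen t ts"
    and shallow: "\<And>i th. i \<ge> t \<Longrightarrow> regen i th \<Longrightarrow> length ts \<le> length th"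
begin

lemma stays_in_body: "Suc t \<le> i \<Longrightarrow> prefix (ts @ [0]) (P i)"
proof (induction i rule: dec_induct)
  case base
  then show ?case using regen_t by (simp add: regenerates_def)
next
  case (step i)
  from play_step[of i] show ?case
  proof
    assume "descends (P i) (C i) (P (Suc i)) (C (Suc i))"
    then show ?thesis
      using step.IH by (auto simp: descends_def intro: prefix_order.trans)
  next
    assume "\<exists>th. regen i th"
    then obtain th where r: "regen i th" ..
    have len: "length ts \<le> length th"
      using shallow r step.hyps(1) by (meson Suc_leD)
    have th: "prefix th (P i)"
      using r by (simp add: regenerates_def strict_prefix_def)
    have ts: "prefix ts (P i)"
      using step.IH prefix_order.trans prefix_prefix by blast
    have "prefix (ts @ [0]) (th @ [0])"
    proof (cases "length th = length ts")
      case True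
      then have "th = ts"
        using prefix_length_prefix[OF th ts] prefix_length_prefix[OF ts th] by simp
      then show ?thesis by simp
    next
      case False
      then have "prefix (ts @ [0]) th"
        using prefix_length_prefix[OF step.IH th] len by simp
      then show ?thesis
        using prefix_order.trans prefix_prefix by blast
    qed
    then show ?thesis
      using r by (simp add: regenerates_def)
  qed
qed

lemma clock_nonincreasing: "i > t \<Longrightarrow> C (Suc i) ts \<le> C i ts"
proof -
  assume "i > t"
  have not_here: "P i \<noteq> ts"
    using stays_in_body[OF Suc_leI[OF \<open>i > t\<close>]] by (auto dest: prefix_length_le)
  from play_step[of i] show ?thesis
  proof
    assume "descends (P i) (C i) (P (Suc i)) (C (Suc i))"
    then show ?thesis
      using not_here by (simp add: descends_def)
  next
    assume "\<exists>th. regen i th"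
    then obtain th where r: "regen i th" ..
    have "length ts \<le> length th"
      using shallow r \<open>i > t\<close> by (meson less_imp_le)
    then have "\<not> prefix (th @ [0]) ts"
      by (auto dest: prefix_length_le)
    then show ?thesis
      using r by (cases "th = ts") (auto simp: regenerates_def)
  qed
qed

end

end

theorem clocked_play_infinite_range:
  fixes C :: "nat \<Rightarrow> nat list \<Rightarrow> 'o::wellorder"
  assumes "clocked_play P C"
  shows "infinite (range P)"
proof
  assume fin: "finite (range P)"
  interpret clocked_play P C by fact
  obtain ts where recur: "INFM i. regen i ts"
    and "MOST i. \<forall>th. regen i th \<longrightarrow> length ts \<le> length th"
    using obtain_shallowest_recurrent_regen[OF fin] .
  then obtain N where N: "\<And>i th. i \<ge> N \<Longrightarrow> regen i th \<Longrightarrow> length ts \<le> length th"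
    by (auto simp: MOST_nat_le)
  obtain t where "t \<ge> N" "regen t ts"
    using recur by (auto simp: INFM_nat_le)
  have "C (Suc i) ts \<le> C i ts" if "i > t" for i
    using clock_nonincreasing[where t = t and ts = ts] \<open>regen t ts\<close> N \<open>t \<ge> N\<close> that
    by (meson order.trans)
  then have "MOST i. C (Suc i) ts \<le> C i ts"
    by (auto simp: MOST_nat)
  then have "MOST i. C (Suc i) ts = C i ts"
    by (rule MOST_Suc_le_imp_MOST_Suc_eq)
  with recur have "INFM i. regen i ts \<and> C (Suc i) ts = C i ts"
    by (rule INFM_conjI)
  then show False
    by (auto simp: regenerates_def dest: INFM_EX)
qed

lemma subat_path_bound: "subat f pi = Some g \<Longrightarrow> set pi \<subseteq> {0, 1} \<and> length pi \<le> size f"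
  by (induction f pi arbitrary: g rule: subat.induct) (auto split: if_splits)

lemma finite_Sub: "finite (Sub f)"
proof (rule finite_subset)
  show "Sub f \<subseteq> {pi. set pi \<subseteq> {0, 1} \<and> length pi \<le> size f}"
    using subat_path_bound unfolding Sub_def by fastforce
  show "finite {pi. set pi \<subseteq> {0::nat, 1} \<and> length pi \<le> size f}"
    by (rule finite_lists_length_le) simp
qed

lemma game_move_from_Sub: "game_move W R V f Gamma (w, pi, c) q \<Longrightarrow> pi \<in> Sub f"
  unfolding game_move_def Sub_def is_rf_def by auto

lemma game_move_descends_or_regenerates:
  assumes "game_move W R V f Gamma (w, pi, c) (w', pi', c')"
  shows "descends pi c pi' c' \<or> (\<exists>th. regenerates th pi c pi' c')"
  using assms unfolding game_move_def
  by (auto simp: descends_def regenerates_def is_rf_def regen_clock_def)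

theorem proposition1:
  fixes W :: "'w set" and R :: "('w \<times> 'w) set" and V :: "'p \<Rightarrow> 'w set"
    and w0 :: 'w and phi0 :: "('p, 'l) fml" and Gamma :: "'o::wellorder"
  assumes "kripke W R V" and "w0 \<in> W" and "sentence phi0"
  shows "\<not> (\<exists>play :: nat \<Rightarrow> ('w, 'o) position.
            play 0 = (w0, [], \<lambda>_. Gamma) \<and>
            (\<forall>i. game_move W R V phi0 Gamma (play i) (play (Suc i))))"
proof
  assume "\<exists>play :: nat \<Rightarrow> ('w, 'o) position.
            play 0 = (w0, [], \<lambda>_. Gamma) \<and>
            (\<forall>i. game_move W R V phi0 Gamma (play i) (play (Suc i)))"
  then obtain play :: "nat \<Rightarrow> ('w, 'o) position"
    where move: "\<And>i. game_move W R V phi0 Gamma (play i) (play (Suc i))" by blast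
  define P where "P i = fst (snd (play i))" for i
  define C where "C i = snd (snd (play i))" for i
  have move': "game_move W R V phi0 Gamma (fst (play i), P i, C i)
      (fst (play (Suc i)), P (Suc i), C (Suc i))" for i
    using move[of i] by (simp add: P_def C_def)
  have "clocked_play P C"
    by unfold_locales (rule game_move_descends_or_regenerates[OF move'])
  then have "infinite (range P)"
    by (rule clocked_play_infinite_range)
  moreover have "range P \<subseteq> Sub phi0"
    using game_move_from_Sub[OF move'] by blast
  ultimately show False
    using finite_Sub finite_subset by blast
qed

end
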